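(* Let $p$ be a prime, $1\le e<p$, and define $f_n\in\mathbb{F}_p[c]$ by $f_1=c$ and $f_{n+1}=c^{p^n}-f_n^e$ for $n\ge1$. Let $\mathfrak{p}\subseteq\mathbb{F}_p[c]$ be a nonzero prime ideal and suppose $r\ge1$ is the least integer with $f_r\in\mathfrak{p}$. Then for all $n\ge1$, \[v_{\mathfrak{p}}(f_n)=\begin{cases}e^{k-1}v_{\mathfrak{p}}(f_r)&\text{if }n=rk,\\0&\text{if }r\nmid n,\end{cases}\] where $v_{\mathfrak{p}}$ is the $\mathfrak{p}$-adic valuation. *)

theory Defs
  imports "HOL-Computational_Algebra.Computational_Algebra"
begin

text \<open>The sequence f_1 = c, f_(n+1) = c^(p^n) - f_n^e in K[c]; index 0 is unused (set to 0).\<close>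
fun fseq :: "nat \<Rightarrow> nat \<Rightarrow> nat \<Rightarrow> 'a::field poly" where
  "fseq p e 0 = 0"
| "fseq p e (Suc 0) = [:0, 1:]"
| "fseq p e (Suc (Suc n)) = [:0, 1:] ^ (p ^ Suc n) - (fseq p e (Suc n)) ^ e"

end

theory Submission
  imports Defs "HOL-Number_Theory.Residues"
begin

text \<open>
  Write \<open>F x = x ^ p ^ r\<close> for the \<open>r\<close>-fold Frobenius and \<open>d j = f (r + j) - F (f j)\<close>.
  The sequences \<open>f (r + j)\<close> and \<open>F (f j)\<close> obey the same recursion
  \<open>x (j + 1) = c ^ p ^ (r + j) - x j ^ e\<close>, so \<open>d 1 = - f r ^ e\<close> and
  \<open>d (j + 1) = F (f j) ^ e - f (r + j) ^ e\<close>. By a joint induction,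
  \<open>v (d j) = e ^ \<lceil>j / r\<rceil> * v (f r)\<close> and \<open>v (f n)\<close> is as claimed: if \<open>r\<close> does not
  divide \<open>j\<close>, then \<open>q\<close> does not divide \<open>F (f j)\<close> and, \<open>e\<close> being a unit, the
  binomial expansion of \<open>(F (f j) + d j) ^ e\<close> gives \<open>v (d (j + 1)) = v (d j)\<close>; if
  \<open>r\<close> divides \<open>j\<close>, then \<open>F (f j)\<close> has the larger valuation in both
  \<open>f (r + j) = F (f j) + d j\<close> and the formula for \<open>d (j + 1)\<close>, because \<open>e < p ^ r\<close>.
\<close>

lemma multiplicity_add_eq_left:
  fixes q x y :: "'a::{factorial_semiring, comm_ring_1}"
  assumes "x \<noteq> 0" and "q ^ Suc (multiplicity q x) dvd y"
  shows "multiplicity q (x + y) = multiplicity q x"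
proof (cases "is_unit q")
  case True
  then show ?thesis by (simp add: multiplicity_unit_left)
next
  case False
  let ?m = "multiplicity q x"
  have "q ^ ?m dvd y"
    by (rule dvd_trans[OF le_imp_power_dvd assms(2)]) simp
  then have "q ^ ?m dvd x + y"
    by (simp add: multiplicity_dvd)
  moreover have "\<not> q ^ Suc ?m dvd x"
    using power_dvd_iff_le_multiplicity[OF assms(1) False, of "Suc ?m"] by simp
  then have "\<not> q ^ Suc ?m dvd x + y"
    by (simp only: dvd_add_left_iff[OF assms(2)] not_False_eq_True)
  ultimately show ?thesis
    by (rule multiplicity_eqI)
qed

lemma multiplicity_add_eq_left_less:
  fixes q x y :: "'a::{factorial_semiring, comm_ring_1}"
  assumes "x \<noteq> 0" and "multiplicity q x < multiplicity q y"
  shows "multiplicity q (x + y) = multiplicity q x"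
  using assms by (intro multiplicity_add_eq_left multiplicity_dvd') simp_all

lemma power2_dvd_power_add_minus_linear:
  fixes x d :: "'a::comm_ring_1"
  shows "d\<^sup>2 dvd (x + d) ^ n - x ^ n - of_nat n * x ^ (n - 1) * d"
proof (induction n)
  case 0
  show ?case by simp
next
  case (Suc n)
  have "of_nat n * x ^ (n - 1) * x = of_nat n * x ^ n"
    by (cases n) simp_all
  then have "(x + d) ^ Suc n - x ^ Suc n - of_nat (Suc n) * x ^ (Suc n - 1) * d
      = (x + d) * ((x + d) ^ n - x ^ n - of_nat n * x ^ (n - 1) * d)
        + d\<^sup>2 * (of_nat n * x ^ (n - 1))"
    by (simp add: algebra_simps power2_eq_square)
  then show ?case
    using Suc.IH by simp
qed

lemma multiplicity_power_add_minus_power: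
  fixes q x d :: "'a::{factorial_semiring, comm_ring_1}"
  assumes "prime q" and "\<not> q dvd x" and "q dvd d" and "\<not> q dvd of_nat n"
  shows "multiplicity q ((x + d) ^ n - x ^ n) = multiplicity q d"
proof (cases "d = 0")
  case True
  then show ?thesis by simp
next
  case False
  define u where "u = of_nat n * x ^ (n - 1)"
  obtain t where "(x + d) ^ n - x ^ n - u * d = d\<^sup>2 * t"
    using power2_dvd_power_add_minus_linear[of d x n] unfolding u_def by (elim dvdE)
  then have expand: "(x + d) ^ n - x ^ n = u * d + d\<^sup>2 * t"
    by (simp add: algebra_simps)
  have "\<not> q dvd u"
    using assms by (auto simp: u_def prime_dvd_mult_iff dest: prime_dvd_power)
  then have "u \<noteq> 0"
    by auto
  have "multiplicity q (u * d) = multiplicity q u + multiplicity q d"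
    using assms(1) \<open>u \<noteq> 0\<close> False by (simp add: prime_elem_multiplicity_mult_distrib)
  with \<open>\<not> q dvd u\<close> have v_ud: "multiplicity q (u * d) = multiplicity q d"
    by (simp add: not_dvd_imp_multiplicity_0)
  have "q ^ multiplicity q d * q dvd d * d"
    using multiplicity_dvd assms(3) by (rule mult_dvd_mono)
  then have "q ^ Suc (multiplicity q (u * d)) dvd d\<^sup>2 * t"
    by (simp add: v_ud power2_eq_square mult.commute[of q] dvd_mult2)
  then show ?thesis
    using multiplicity_add_eq_left[of "u * d"] expand v_ud \<open>u \<noteq> 0\<close> False by simp
qed

lemma freshmans_dream_diff:
  fixes x y :: "'a::comm_ring_1"
  assumes "prime CHAR('a)"
  shows "(x - y) ^ CHAR('a) ^ n = x ^ CHAR('a) ^ n - y ^ CHAR('a) ^ n"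
  using freshmans_dream'[OF assms refl, where x = "x - y" and y = y] by (simp add: eq_diff_eq)

lemma CHAR_eq_card_prime:
  assumes "prime (card (UNIV :: 'a::field set))"
  shows "CHAR('a) = card (UNIV :: 'a set)"
proof -
  have "finite (UNIV :: 'a set)"
    using assms by (metis card.infinite not_prime_0)
  then have "prime CHAR('a)"
    by (intro prime_CHAR_semidom finite_imp_CHAR_pos)
  moreover have "CHAR('a) dvd card (UNIV :: 'a set)"
    by (rule CHAR_dvd_CARD)
  ultimately show ?thesis
    using assms primes_dvd_imp_eq by blast
qed

lemma fseq_Suc: "1 \<le> n \<Longrightarrow> fseq p e (Suc n) = [:0, 1:] ^ p ^ n - fseq p e n ^ e"
  by (cases n) auto

lemma degree_fseq:
  assumes "e < p" and "1 \<le> n"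
  shows "degree (fseq p e n :: 'a::field poly) = p ^ (n - 1)"
  using assms(2)
proof (induction n rule: nat_induct_at_least)
  case base
  show ?case by simp
next
  case (Suc n)
  have "fseq p e n \<noteq> (0 :: 'a poly)"
    using Suc.IH assms(1) by (intro notI) simp
  then have "degree (fseq p e n ^ e :: 'a poly) = e * p ^ (n - 1)"
    using Suc.IH by (simp add: degree_power_eq)
  also have "e * p ^ (n - 1) < p * p ^ (n - 1)"
    using assms(1) by simp
  also have "\<dots> = p ^ n"
    using Suc.hyps by (simp add: power_eq_if)
  finally have "degree (fseq p e n ^ e :: 'a poly) < degree ([:0, 1:] ^ p ^ n :: 'a poly)"
    by (simp add: degree_linear_power)
  then show ?case
    using Suc.hyps degree_add_eq_left[of "- (fseq p e n ^ e)" "[:0, 1:] ^ p ^ n"]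
    by (simp add: fseq_Suc degree_linear_power)
qed

lemma fseq_nonzero: "e < p \<Longrightarrow> 1 \<le> n \<Longrightarrow> fseq p e n \<noteq> (0 :: 'a::field poly)"
  using degree_fseq[of e p n, where 'a = 'a] by (intro notI) simp

text \<open>Both sides follow the recursion of \<open>fseq\<close>: the Frobenius \<open>x \<mapsto> x ^ p ^ r\<close> is a ring
  endomorphism carrying \<open>c ^ p ^ j\<close> to \<open>c ^ p ^ (r + j)\<close>.\<close>
lemma fseq_shift_diff_Suc:
  assumes "prime p" and "CHAR('a::field) = p" and "1 \<le> j"
  shows "fseq p e (r + Suc j) - (fseq p e (Suc j) :: 'a poly) ^ p ^ r
       = (fseq p e j ^ p ^ r) ^ e - fseq p e (r + j) ^ e"
proof -
  have frobenius: "(x - y) ^ p ^ r = x ^ p ^ r - y ^ p ^ r" for x y :: "'a poly"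
    using freshmans_dream_diff[where 'a = "'a poly", of x y r] assms(1,2) by simp
  have "(fseq p e (Suc j) :: 'a poly) ^ p ^ r
      = ([:0, 1:] ^ p ^ j) ^ p ^ r - (fseq p e j ^ e) ^ p ^ r"
    by (simp only: fseq_Suc[OF assms(3)] frobenius)
  also have "\<dots> = [:0, 1:] ^ p ^ (r + j) - (fseq p e j ^ p ^ r) ^ e"
    by (simp only: power_mult[symmetric] power_add[symmetric] mult.commute add.commute)
  finally show ?thesis
    using assms(3) by (simp add: fseq_Suc)
qed

locale fseq_rank_of_apparition =
  fixes p e r :: nat and q :: "'a::{field_gcd,finite} poly"
  assumes prime_p: "prime p" and card_UNIV: "card (UNIV :: 'a set) = p"
    and e_pos: "1 \<le> e" and e_less_p: "e < p"
    and prime_q: "prime q"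
    and r_pos: "1 \<le> r" and q_dvd_f_r: "q dvd fseq p e r"
    and q_not_dvd_f: "\<forall>m. 1 \<le> m \<and> m < r \<longrightarrow> \<not> q dvd fseq p e m"
begin

abbreviation f :: "nat \<Rightarrow> 'a poly" where "f n \<equiv> fseq p e n"

abbreviation v :: "'a poly \<Rightarrow> nat" where "v x \<equiv> multiplicity q x"

definition d :: "nat \<Rightarrow> 'a poly" where "d j = f (r + j) - f j ^ p ^ r"

definition val_f :: "nat \<Rightarrow> nat" where
  "val_f n = (if r dvd n then e ^ (n div r - 1) * v (f r) else 0)"

text \<open>\<open>val_d j = e ^ \<lceil>j / r\<rceil> * v (f r)\<close> for \<open>j \<ge> 1\<close>.\<close>
definition val_d :: "nat \<Rightarrow> nat" where
  "val_d j = e ^ Suc ((j - 1) div r) * v (f r)"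

lemma CHAR_eq: "CHAR('a) = p"
  using CHAR_eq_card_prime[where 'a = 'a] card_UNIV prime_p by simp

lemma q_not_unit: "\<not> is_unit q"
  using prime_q not_prime_unit by blast

lemma f_nonzero: "1 \<le> n \<Longrightarrow> f n \<noteq> 0"
  using fseq_nonzero e_less_p by blast

lemma v_power_f: "1 \<le> n \<Longrightarrow> v (f n ^ k) = k * v (f n)"
  using f_nonzero prime_q by (simp add: prime_elem_multiplicity_power_distrib)

lemma q_not_dvd_e: "\<not> q dvd of_nat e"
proof -
  have "of_nat e \<noteq> (0 :: 'a)"
    using e_pos e_less_p CHAR_eq by (simp add: of_nat_eq_0_iff_char_dvd nat_dvd_not_less)
  then have "is_unit (of_nat e :: 'a poly)"
    by (metis of_nat_poly is_unit_const_poly_iff dvd_field_iff)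
  then show ?thesis
    using prime_q by (meson dvd_unit_imp_unit not_prime_unit)
qed

lemma v_f_r_pos: "1 \<le> v (f r)"
  using multiplicity_gt_zero_iff[OF f_nonzero[OF r_pos] q_not_unit] q_dvd_f_r
  by simp

lemma e_less_p_power: "e < p ^ r"
proof -
  have "p \<le> p ^ r"
    using r_pos prime_gt_0_nat[OF prime_p] by (simp add: self_le_power)
  then show ?thesis
    using e_less_p by linarith
qed

lemma val_d_pos: "1 \<le> val_d j"
  using e_pos v_f_r_pos by (simp add: val_d_def)

lemma val_at_multiple:
  assumes "r dvd j" and "1 \<le> j"
  shows "1 \<le> val_f j" and "val_f (r + j) = e * val_f j"
    and "val_d j = e * val_f j" and "val_d (Suc j) = e * val_f (r + j)"
proof -
  obtain k where j: "j = r * k"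
    using assms(1) ..
  with assms(2) have k: "1 \<le> k"
    by (cases k) auto
  have j_div: "j div r = k" and rj_div: "(r + j) div r = Suc k"
    using j r_pos by simp_all
  have "Suc (j - 1) = j"
    using assms(2) by simp
  then have "j div r = Suc ((j - 1) div r)"
    using div_Suc[of "j - 1" r] assms(1) by (simp add: dvd_eq_mod_eq_0)
  then have j1_div: "Suc ((j - 1) div r) = k"
    using j_div by simp
  have e_k: "e ^ k = e * e ^ (k - 1)"
    using k by (simp flip: power_Suc)
  have "val_f j = e ^ (k - 1) * v (f r)"
    using assms(1) j_div by (simp add: val_f_def)
  moreover have "val_f (r + j) = e ^ k * v (f r)"
    using assms(1) rj_div by (simp add: val_f_def)
  moreover have "val_d j = e ^ k * v (f r)"
    using j1_div by (simp add: val_d_def)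
  moreover have "val_d (Suc j) = e * (e ^ k * v (f r))"
    using j_div by (simp add: val_d_def)
  ultimately show "1 \<le> val_f j" "val_f (r + j) = e * val_f j"
    and "val_d j = e * val_f j" "val_d (Suc j) = e * val_f (r + j)"
    using e_k e_pos v_f_r_pos by simp_all
qed

lemma val_at_non_multiple:
  assumes "\<not> r dvd j" and "1 \<le> j"
  shows "val_f j = 0" and "val_f (r + j) = 0" and "val_d (Suc j) = val_d j"
proof -
  have "j div r = (j - 1) div r"
    using div_Suc[of "j - 1" r] assms by (simp add: dvd_eq_mod_eq_0)
  then show "val_f j = 0" "val_f (r + j) = 0" "val_d (Suc j) = val_d j"
    using assms by (simp_all add: val_f_def val_d_def)
qed

lemma v_f_upto_r:
  assumes "1 \<le> n" and "n \<le> r"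
  shows "v (f n) = val_f n"
proof (cases "n = r")
  case True
  then show ?thesis
    using r_pos by (simp add: val_f_def)
next
  case False
  with assms have "\<not> r dvd n" and "\<not> q dvd f n"
    using q_not_dvd_f by (auto simp: nat_dvd_not_less)
  then show ?thesis
    by (simp add: val_f_def not_dvd_imp_multiplicity_0)
qed

lemma v_d_one: "v (d 1) = val_d 1"
proof -
  have "d 1 = - (f r ^ e)"
    by (simp add: d_def fseq_Suc[OF r_pos])
  then show ?thesis
    using v_power_f[OF r_pos] by (simp add: val_d_def)
qed

lemma v_f_shift:
  assumes "1 \<le> j" and v_f: "v (f j) = val_f j" and v_d: "v (d j) = val_d j"
  shows "v (f (r + j)) = val_f (r + j)"
proof -
  have f_eq: "f (r + j) = f j ^ p ^ r + d j"
    by (simp add: d_def)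
  have "d j \<noteq> 0"
    using v_d val_d_pos[of j] by (intro notI) simp
  have v_F: "v (f j ^ p ^ r) = p ^ r * val_f j"
    using v_power_f[OF assms(1)] v_f by simp
  have F_nonzero: "f j ^ p ^ r \<noteq> 0"
    using f_nonzero[OF assms(1)] by simp
  show ?thesis
  proof (cases "r dvd j")
    case False
    note vals = val_at_non_multiple[OF False assms(1)]
    have "v (f j ^ p ^ r + d j) = v (f j ^ p ^ r)"
      using F_nonzero v_F v_d val_d_pos[of j] vals by (intro multiplicity_add_eq_left_less) simp_all
    then show ?thesis
      using f_eq v_F vals by simp
  next
    case True
    note vals = val_at_multiple[OF True assms(1)]
    have "v (d j) < v (f j ^ p ^ r)"
      using v_d v_F vals e_less_p_power by simp
    then have "v (d j + f j ^ p ^ r) = v (d j)"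
      by (rule multiplicity_add_eq_left_less[OF \<open>d j \<noteq> 0\<close>])
    then show ?thesis
      using f_eq v_d vals by (simp add: add.commute)
  qed
qed

lemma v_d_Suc:
  assumes "1 \<le> j" and v_f: "v (f j) = val_f j" and v_d: "v (d j) = val_d j"
    and v_f_shifted: "v (f (r + j)) = val_f (r + j)"
  shows "v (d (Suc j)) = val_d (Suc j)"
proof -
  let ?F = "f j ^ p ^ r"
  have d_Suc: "d (Suc j) = ?F ^ e - f (r + j) ^ e"
    using fseq_shift_diff_Suc[OF prime_p CHAR_eq assms(1)] by (simp add: d_def)
  show ?thesis
  proof (cases "r dvd j")
    case False
    note vals = val_at_non_multiple[OF False assms(1)]
    have "\<not> q dvd f j"
      using v_f vals multiplicity_gt_zero_iff[OF f_nonzero[OF assms(1)] q_not_unit]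
      by simp
    then have "\<not> q dvd ?F"
      using prime_q prime_dvd_power by blast
    have "q dvd d j"
      using v_d val_d_pos[of j] multiplicity_dvd'[of 1 q "d j"] by simp
    have "d (Suc j) = - ((?F + d j) ^ e - ?F ^ e)"
      using d_Suc by (simp add: d_def)
    then have "v (d (Suc j)) = v ((?F + d j) ^ e - ?F ^ e)"
      by (simp only: multiplicity_uminus_right)
    also have "\<dots> = v (d j)"
      using prime_q \<open>\<not> q dvd ?F\<close> \<open>q dvd d j\<close> q_not_dvd_e
      by (rule multiplicity_power_add_minus_power)
    finally show ?thesis
      using v_d vals by simp
  next
    case True
    note vals = val_at_multiple[OF True assms(1)]
    have "v (?F ^ e) = e * (p ^ r * val_f j)"
      using v_power_f[OF assms(1), of "p ^ r * e"] v_f by (simp add: power_mult)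
    moreover have v_G: "v (- (f (r + j) ^ e)) = e * val_f (r + j)"
      using v_power_f[of "r + j" e] v_f_shifted assms(1) by simp
    ultimately have "v (- (f (r + j) ^ e)) < v (?F ^ e)"
      using vals e_pos e_less_p_power by simp
    moreover have "- (f (r + j) ^ e) \<noteq> 0"
      using f_nonzero[of "r + j"] r_pos by simp
    ultimately have "v (- (f (r + j) ^ e) + ?F ^ e) = v (- (f (r + j) ^ e))"
      by (intro multiplicity_add_eq_left_less)
    then show ?thesis
      using d_Suc vals v_G by simp
  qed
qed

lemma v_f_and_d: "1 \<le> n \<Longrightarrow> v (f n) = val_f n \<and> v (d n) = val_d n"
proof (induction n rule: less_induct)
  case (less n)
  have v_f: "v (f n) = val_f n"
  proof (cases "n \<le> r")
    case True
    then show ?thesis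
      using less.prems by (rule v_f_upto_r[rotated])
  next
    case False
    define j where "j = n - r"
    have "n = r + j" and "1 \<le> j" and "j < n"
      using False r_pos by (simp_all add: j_def)
    with less.IH[of j] have "v (f j) = val_f j" and "v (d j) = val_d j"
      by simp_all
    with \<open>n = r + j\<close> show ?thesis
      using v_f_shift[OF \<open>1 \<le> j\<close>] by simp
  qed
  have "v (d n) = val_d n"
  proof (cases "n = 1")
    case True
    then show ?thesis
      using v_d_one by simp
  next
    case False
    then obtain j where n: "n = Suc j" and "1 \<le> j"
      using less.prems by (cases n) auto
    with less.IH[of j] have IH: "v (f j) = val_f j" "v (d j) = val_d j"
      by simp_all
    show ?thesis
      using n v_d_Suc[OF \<open>1 \<le> j\<close> IH v_f_shift[OF \<open>1 \<le> j\<close> IH]] by simp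
  qed
  with v_f show ?case ..
qed

end

theorem lemma5p3:
  fixes p e r :: nat and q :: "'a::{field_gcd,finite} poly"
  assumes "prime p" and "card (UNIV :: 'a set) = p"
    and "1 \<le> e" and "e < p"
    and "prime q"
    and "1 \<le> r" and "q dvd fseq p e r"
    and "\<forall>m. 1 \<le> m \<and> m < r \<longrightarrow> \<not> q dvd fseq p e m"
  shows "(\<forall>k\<ge>1. multiplicity q (fseq p e (r * k)) = e ^ (k - 1) * multiplicity q (fseq p e r))
       \<and> (\<forall>n\<ge>1. \<not> r dvd n \<longrightarrow> multiplicity q (fseq p e n) = 0)"
proof -
  interpret fseq_rank_of_apparition p e r q
    using assms by unfold_locales
  have v_f: "v (f n) = val_f n" if "1 \<le> n" for n
    using v_f_and_d that by blast
  show ?thesis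
  proof (intro conjI allI impI)
    fix k :: nat
    assume "1 \<le> k"
    then show "v (f (r * k)) = e ^ (k - 1) * v (f r)"
      using v_f[of "r * k"] r_pos by (simp add: val_f_def)
  next
    fix n :: nat
    assume "1 \<le> n" and "\<not> r dvd n"
    then show "v (f n) = 0"
      using v_f[of n] by (simp add: val_f_def)
  qed
qed

end
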